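(* Let $d\in\mathbb{N}$. Then there exists a $\left(d+1,\frac{1}{2d}\right)$-secluded unit hypercube partition $\mathcal{P}$ of $\mathbb{R}^{d}$. That is, for every point $\vec{p}\in\mathbb{R}^{d}$, \[\left|\mathcal{N}_{\frac{1}{2d}}(\vec{p})\right|\leq d+1.\]
   Context: $\mathbb{N}$ denotes the positive integers. On $\mathbb{R}^d$ use the metric $d_{max}(\vec{x},\vec{y})=\max_{i\in[d]}|x_i-y_i|$ (the $\ell^\infty$ metric); $\overline{B}_{\epsilon}(\vec{p})=\{\vec{x}\in\mathbb{R}^d: d_{max}(\vec{x},\vec{p})\le\epsilon\}$ is the closed ball. For a partition $\mathcal{P}$ of $\mathbb{R}^d$, $\vec{p}\in\mathbb{R}^d$ and $\epsilon>0$, $\mathcal{N}_{\epsilon}(\vec{p})=\{X\in\mathcal{P}: X\cap\overline{B}_{\epsilon}(\vec{p})\neq\emptyset\}$. A partition $\mathcal{P}$ of $\mathbb{R}^d$ is $(k,\epsilon)$-secluded if $|\mathcal{N}_\epsilon(\vec{p})|\le k$ for every $\vec{p}\in\mathbb{R}^d$. A unit hypercube is a set of the form $\vec{a}+[0,1)^d$ with $\vec{a}\in\mathbb{R}^d$; a unit hypercube partition is a partition of $\mathbb{R}^d$ all of whose members are unit hypercubes. *)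

theory Defs
  imports "HOL-Analysis.Analysis"
begin

text \<open>Points of R^d are vectors of type real^'n with d = CARD('n).\<close>

definition dmax :: "real^'n \<Rightarrow> real^'n \<Rightarrow> real" where
  "dmax x y = Max (range (\<lambda>i. \<bar>x $ i - y $ i\<bar>))"

definition closed_ball_max :: "real \<Rightarrow> real^'n \<Rightarrow> (real^'n) set" where
  "closed_ball_max e p = {x. dmax x p \<le> e}"

definition is_partition :: "'a set set \<Rightarrow> 'a set \<Rightarrow> bool" where
  "is_partition P S \<longleftrightarrow> (\<forall>X\<in>P. X \<noteq> {}) \<and> (\<forall>X\<in>P. \<forall>Y\<in>P. X \<noteq> Y \<longrightarrow> X \<inter> Y = {}) \<and> \<Union>P = S"

definition neighborhood :: "(real^'n) set set \<Rightarrow> real \<Rightarrow> real^'n \<Rightarrow> (real^'n) set set" where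
  "neighborhood P e p = {X\<in>P. X \<inter> closed_ball_max e p \<noteq> {}}"

definition secluded :: "(real^'n) set set \<Rightarrow> nat \<Rightarrow> real \<Rightarrow> bool" where
  "secluded P k e \<longleftrightarrow> is_partition P UNIV \<and>
     (\<forall>p. finite (neighborhood P e p) \<and> card (neighborhood P e p) \<le> k)"

definition unit_hypercube :: "(real^'n) set \<Rightarrow> bool" where
  "unit_hypercube X \<longleftrightarrow> (\<exists>a. X = {x. \<forall>i. a $ i \<le> x $ i \<and> x $ i < a $ i + 1})"

definition unit_hypercube_partition :: "(real^'n) set set \<Rightarrow> bool" where
  "unit_hypercube_partition P \<longleftrightarrow> is_partition P UNIV \<and> (\<forall>X\<in>P. unit_hypercube X)"

end

theory Submission
  imports Defs
begin

text \<open>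
  Rank the coordinates by a bijection r onto {0, ..., d-1} and index the cubes by m in Z^d: the
  cube of index m has its corner at m_i + S_{r i}(m)/d in coordinate i, where
  S_k(m) = sum over t < k of (t + 1) * m at the coordinate of rank t. The shift of a coordinate
  depends only on the indices of lower rank, so the cubes tile R^d (indices are found and compared
  rank by rank). Multiplying the corner of the top-ranked coordinate by d gives the integer S_d(m);
  for all cubes meeting the ball of radius 1/(2d) around p it lies in a half-open interval of
  length d + 1, so it takes at most d + 1 values. It also determines the cube: for two such cubes
  the index difference n satisfies |d n_k + S_k(n)| <= d, which gives |S_k(n)| <= k by induction,
  and then S_d(n) = 0 forces n = 0 by descending induction.
\<close>

definition unit_cube_at :: "real^'n \<Rightarrow> (real^'n) set" where
  "unit_cube_at a = {x. \<forall>i. a$i \<le> x$i \<and> x$i < a$i + 1}"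

lemma unit_cube_at_corner: "a \<in> unit_cube_at a"
  unfolding unit_cube_at_def by simp

lemma dmax_ge_component: "\<bar>x$i - p$i\<bar> \<le> dmax x p"
  unfolding dmax_def by (rule Max_ge) auto

lemma unit_cube_at_meets_ball_bounds:
  assumes "unit_cube_at c \<inter> closed_ball_max e p \<noteq> {}"
  shows "p$i - e - 1 < c$i" "c$i \<le> p$i + e"
proof -
  obtain x where "c$i \<le> x$i" "x$i < c$i + 1" "dmax x p \<le> e"
    using assms unfolding unit_cube_at_def closed_ball_max_def by auto
  with dmax_ge_component[of x i p] show "p$i - e - 1 < c$i" "c$i \<le> p$i + e"
    by linarith+
qed

section \<open>Cubes with lower triangular shifts\<close>

lemma triangular_cubes_cover:
  fixes x :: "real^'n::finite" and r :: "'n \<Rightarrow> nat"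
  assumes triangular: "\<And>m m' i. (\<And>j. r j < r i \<Longrightarrow> m j = m' j) \<Longrightarrow> s m i = s m' i"
  shows "\<exists>m. x \<in> unit_cube_at (\<chi> i. of_int (m i) + s m i)"
proof -
  have "\<exists>m. \<forall>i. r i < k \<longrightarrow> of_int (m i) + s m i \<le> x$i \<and> x$i < of_int (m i) + s m i + 1" for k
  proof (induction k)
    case 0
    show ?case by simp
  next
    case (Suc k)
    then obtain m where m: "\<forall>i. r i < k \<longrightarrow> of_int (m i) + s m i \<le> x$i \<and> x$i < of_int (m i) + s m i + 1"
      by blast
    define m' where "m' i = (if r i = k then \<lfloor>x$i - s m i\<rfloor> else m i)" for i
    have s_eq: "s m' i = s m i" if "r i \<le> k" for i
      using that by (intro triangular) (simp add: m'_def)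
    show ?case
    proof (intro exI allI impI)
      fix i
      assume "r i < Suc k"
      then show "of_int (m' i) + s m' i \<le> x$i \<and> x$i < of_int (m' i) + s m' i + 1"
        using m s_eq[of i] unfolding m'_def by (cases "r i = k") (auto, linarith+)
    qed
  qed
  from this[of "Suc (Max (range r))"] obtain m
    where "\<forall>i. r i < Suc (Max (range r)) \<longrightarrow> of_int (m i) + s m i \<le> x$i \<and> x$i < of_int (m i) + s m i + 1"
    by blast
  then have "x \<in> unit_cube_at (\<chi> i. of_int (m i) + s m i)"
    unfolding unit_cube_at_def by (simp add: le_imp_less_Suc)
  then show ?thesis by blast
qed

lemma triangular_cubes_disjoint:
  fixes x :: "real^'n::finite" and r :: "'n \<Rightarrow> nat"
  assumes triangular: "\<And>m m' i. (\<And>j. r j < r i \<Longrightarrow> m j = m' j) \<Longrightarrow> s m i = s m' i"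
    and x: "x \<in> unit_cube_at (\<chi> i. of_int (m i) + s m i)" "x \<in> unit_cube_at (\<chi> i. of_int (m' i) + s m' i)"
  shows "m = m'"
proof -
  have "\<forall>i. r i < k \<longrightarrow> m i = m' i" for k
  proof (induction k)
    case 0
    show ?case by simp
  next
    case (Suc k)
    show ?case
    proof (intro allI impI)
      fix i
      assume "r i < Suc k"
      then have "s m i = s m' i"
        using Suc.IH by (intro triangular) auto
      moreover have "of_int (m i) + s m i \<le> x$i" "x$i < of_int (m i) + s m i + 1"
        "of_int (m' i) + s m' i \<le> x$i" "x$i < of_int (m' i) + s m' i + 1"
        using x unfolding unit_cube_at_def by simp_all
      ultimately have "\<bar>real_of_int (m i) - real_of_int (m' i)\<bar> < 1"
        by linarith
      then show "m i = m' i"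
        by (simp flip: of_int_diff)
    qed
  qed
  then show ?thesis
    by (meson ext lessI)
qed

lemma triangular_cubes_partition:
  fixes r :: "'n::finite \<Rightarrow> nat"
  assumes "\<And>m m' i. (\<And>j. r j < r i \<Longrightarrow> m j = m' j) \<Longrightarrow> s m i = s m' i"
  shows "unit_hypercube_partition (range (\<lambda>m. unit_cube_at (\<chi> i. of_int (m i) + s m i)))"
  unfolding unit_hypercube_partition_def is_partition_def
proof (intro conjI ballI impI)
  fix X
  assume "X \<in> range (\<lambda>m. unit_cube_at (\<chi> i. of_int (m i) + s m i))"
  then obtain m where X: "X = unit_cube_at (\<chi> i. of_int (m i) + s m i)"
    by blast
  show "X \<noteq> {}"
    using X unit_cube_at_corner by blast
  show "unit_hypercube X"
    unfolding X unit_cube_at_def unit_hypercube_def by (rule exI) (rule refl)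
next
  fix X Y
  assume "X \<in> range (\<lambda>m. unit_cube_at (\<chi> i. of_int (m i) + s m i))"
    "Y \<in> range (\<lambda>m. unit_cube_at (\<chi> i. of_int (m i) + s m i))" "X \<noteq> Y"
  then obtain m m' where X: "X = unit_cube_at (\<chi> i. of_int (m i) + s m i)"
    and Y: "Y = unit_cube_at (\<chi> i. of_int (m' i) + s m' i)" and "m \<noteq> m'"
    by blast
  show "X \<inter> Y = {}"
  proof (rule ccontr)
    assume "X \<inter> Y \<noteq> {}"
    then obtain x where "x \<in> X" "x \<in> Y"
      by blast
    with assms have "m = m'"
      unfolding X Y by (rule triangular_cubes_disjoint)
    with \<open>m \<noteq> m'\<close> show False ..
  qed
next
  have "\<exists>m. x \<in> unit_cube_at (\<chi> i. of_int (m i) + s m i)" for x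
    using assms by (rule triangular_cubes_cover)
  then show "\<Union> (range (\<lambda>m. unit_cube_at (\<chi> i. of_int (m i) + s m i))) = UNIV"
    by blast
qed

definition weighted_prefix_sum :: "(nat \<Rightarrow> int) \<Rightarrow> nat \<Rightarrow> int" where
  "weighted_prefix_sum a k = (\<Sum>j<k. int (Suc j) * a j)"

lemma weighted_prefix_sum_0 [simp]: "weighted_prefix_sum a 0 = 0"
  by (simp add: weighted_prefix_sum_def)

lemma weighted_prefix_sum_Suc [simp]:
  "weighted_prefix_sum a (Suc k) = weighted_prefix_sum a k + int (Suc k) * a k"
  by (simp add: weighted_prefix_sum_def)

lemma weighted_prefix_sum_diff:
  "weighted_prefix_sum (\<lambda>j. a j - b j) k = weighted_prefix_sum a k - weighted_prefix_sum b k"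
  by (simp add: weighted_prefix_sum_def right_diff_distrib sum_subtractf)

lemma weighted_prefix_sum_cong:
  "(\<And>j. j < k \<Longrightarrow> a j = b j) \<Longrightarrow> weighted_prefix_sum a k = weighted_prefix_sum b k"
  unfolding weighted_prefix_sum_def by (rule sum.cong) auto

lemma weighted_prefix_sum_bound:
  assumes small: "\<And>k. k < d \<Longrightarrow> \<bar>int d * a k + weighted_prefix_sum a k\<bar> \<le> int d"
  shows "k \<le> d \<Longrightarrow> \<bar>weighted_prefix_sum a k\<bar> \<le> int k"
proof (induction k)
  case 0
  show ?case by simp
next
  case (Suc k)
  let ?s = "weighted_prefix_sum a k"
  have s: "\<bar>?s\<bar> \<le> int k" and d: "int k < int d"
    using Suc by auto
  have step: "\<bar>int d * a k + ?s\<bar> \<le> int d"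
    using Suc.prems by (intro small) simp
  have "a k \<in> {-1, 0, 1}"
  proof (rule ccontr)
    assume "a k \<notin> {-1, 0, 1}"
    then have "2 \<le> \<bar>a k\<bar>"
      by auto
    then have "int d * 2 \<le> \<bar>int d * a k\<bar>"
      by (simp add: abs_mult mult_left_mono)
    with s d step show False
      by linarith
  qed
  \<comment> \<open>if a k = 1 then step forces ?s <= 0, and symmetrically for a k = -1\<close>
  with s step show ?case
    by auto
qed

lemma weighted_prefix_sum_eq_0:
  assumes small: "\<And>k. k < d \<Longrightarrow> \<bar>int d * a k + weighted_prefix_sum a k\<bar> \<le> int d"
    and total: "weighted_prefix_sum a d = 0"
    and "k < d"
  shows "a k = 0"
proof -
  have zero: "weighted_prefix_sum a k = 0" if "k \<le> d" for k
    using that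
  proof (induction rule: inc_induct)
    case base
    show ?case by (fact total)
  next
    case (step k)
    have "\<bar>weighted_prefix_sum a k\<bar> \<le> int k"
      using step.hyps by (intro weighted_prefix_sum_bound[OF small]) auto
    moreover have "weighted_prefix_sum a k = - (int (Suc k) * a k)"
      using step.IH by simp
    ultimately have "int (Suc k) * \<bar>a k\<bar> \<le> int k"
      by (simp add: abs_mult)
    then have "\<bar>a k\<bar> < 1"
      by (smt (verit) int_Suc mult_less_cancel_left2 of_nat_0_le_iff)
    with step.IH show ?case
      by simp
  qed
  have "int (Suc k) * a k = 0"
    using zero[of k] zero[of "Suc k"] \<open>k < d\<close> by simp
  then show ?thesis
    by simp
qed

lemma inj_on_into_int_interval_card_le:
  fixes g :: "'a \<Rightarrow> int"
  assumes "inj_on g M" "g ` M \<subseteq> {a .. a + int k}"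
  shows "finite M \<and> card M \<le> Suc k"
proof
  have "finite (g ` M)"
    using assms(2) by (rule finite_subset) simp
  then show "finite M"
    using assms(1) by (rule finite_imageD)
  have "card M = card (g ` M)"
    using assms(1) by (simp add: card_image)
  also have "\<dots> \<le> card {a .. a + int k}"
    using assms(2) by (intro card_mono) simp_all
  finally show "card M \<le> Suc k"
    by simp
qed

section \<open>The staircase partition\<close>

definition staircase_shift :: "('n::finite \<Rightarrow> nat) \<Rightarrow> ('n \<Rightarrow> int) \<Rightarrow> 'n \<Rightarrow> real" where
  "staircase_shift r m i = of_int (weighted_prefix_sum (m \<circ> inv r) (r i)) / real CARD('n)"

definition staircase_corner :: "('n::finite \<Rightarrow> nat) \<Rightarrow> ('n \<Rightarrow> int) \<Rightarrow> real^'n" where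
  "staircase_corner r m = (\<chi> i. of_int (m i) + staircase_shift r m i)"

lemma staircase_shift_triangular:
  assumes bij: "bij_betw r UNIV {..<CARD('n::finite)}"
    and lower: "\<And>j. r j < r i \<Longrightarrow> m j = m' j"
  shows "staircase_shift r m i = staircase_shift r m' i"
proof -
  have "weighted_prefix_sum (m \<circ> inv r) (r i) = weighted_prefix_sum (m' \<circ> inv r) (r i)"
  proof (rule weighted_prefix_sum_cong)
    fix t
    assume "t < r i"
    moreover have "r i < CARD('n)"
      using bij by (auto simp: bij_betw_def)
    ultimately have "r (inv r t) = t"
      using bij by (auto simp: bij_betw_def f_inv_into_f)
    with \<open>t < r i\<close> show "(m \<circ> inv r) t = (m' \<circ> inv r) t"
      using lower by simp
  qed
  then show ?thesis
    unfolding staircase_shift_def by simp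
qed

lemma staircase_partition:
  assumes "bij_betw r UNIV {..<CARD('n::finite)}"
  shows "unit_hypercube_partition (range (\<lambda>m. unit_cube_at (staircase_corner r m :: real^'n)))"
  unfolding staircase_corner_def
  by (rule triangular_cubes_partition[where r = r]) (rule staircase_shift_triangular[OF assms])

lemma scaled_staircase_corner:
  "real CARD('n) * staircase_corner r m $ i
    = of_int (int CARD('n) * m i + weighted_prefix_sum (m \<circ> inv r) (r i))"
  for r :: "'n::finite \<Rightarrow> nat"
  unfolding staircase_corner_def staircase_shift_def by (simp add: field_simps)

lemma scaled_staircase_corner_top:
  fixes r :: "'n::finite \<Rightarrow> nat"
  assumes bij: "bij_betw r UNIV {..<CARD('n)}" and top: "r i = CARD('n) - 1"
  shows "real CARD('n) * staircase_corner r m $ i = of_int (weighted_prefix_sum (m \<circ> inv r) CARD('n))"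
proof -
  have "inv r (r i) = i"
    using bij by (simp add: bij_betw_def)
  moreover have "CARD('n) = Suc (r i)"
    using top by simp
  ultimately have "weighted_prefix_sum (m \<circ> inv r) CARD('n)
      = int CARD('n) * m i + weighted_prefix_sum (m \<circ> inv r) (r i)"
    by simp
  then show ?thesis
    by (simp add: scaled_staircase_corner)
qed

lemma staircase_index_eqI:
  fixes r :: "'n::finite \<Rightarrow> nat"
  assumes bij: "bij_betw r UNIV {..<CARD('n)}"
    and close: "\<And>i. \<bar>staircase_corner r m $ i - staircase_corner r m' $ i\<bar> < 1 + 1 / real CARD('n)"
    and same_top: "weighted_prefix_sum (m \<circ> inv r) CARD('n) = weighted_prefix_sum (m' \<circ> inv r) CARD('n)"
  shows "m = m'"
proof -
  let ?d = "CARD('n)"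
  define a where "a = (\<lambda>k. (m \<circ> inv r) k - (m' \<circ> inv r) k)"
  have small: "\<bar>int ?d * a k + weighted_prefix_sum a k\<bar> \<le> int ?d" if "k < ?d" for k
  proof -
    define i where "i = inv r k"
    have "r i = k"
      using bij that unfolding i_def by (auto simp: bij_betw_def f_inv_into_f)
    then have "of_int (int ?d * a k + weighted_prefix_sum a k)
        = real ?d * (staircase_corner r m $ i - staircase_corner r m' $ i)"
      unfolding a_def weighted_prefix_sum_diff right_diff_distrib scaled_staircase_corner
      by (simp add: i_def comp_def algebra_simps)
    moreover have "real ?d * \<bar>staircase_corner r m $ i - staircase_corner r m' $ i\<bar>
        < real ?d * (1 + 1 / real ?d)"
      using close by (intro mult_strict_left_mono) simp_all
    ultimately have "\<bar>real_of_int (int ?d * a k + weighted_prefix_sum a k)\<bar> < real ?d + 1"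
      by (simp add: abs_mult distrib_left)
    then show ?thesis
      by linarith
  qed
  have "weighted_prefix_sum a ?d = 0"
    using same_top unfolding a_def weighted_prefix_sum_diff by (simp add: comp_def)
  with small have a0: "a k = 0" if "k < ?d" for k
    using that by (rule weighted_prefix_sum_eq_0)
  show "m = m'"
  proof
    fix i
    have "inv r (r i) = i" "r i < ?d"
      using bij by (auto simp: bij_betw_def)
    then show "m i = m' i"
      using a0[of "r i"] by (simp add: a_def)
  qed
qed

lemma staircase_top_sum_near_point:
  fixes r :: "'n::finite \<Rightarrow> nat"
  assumes bij: "bij_betw r UNIV {..<CARD('n)}" and top: "r t = CARD('n) - 1"
    and meets: "unit_cube_at (staircase_corner r m) \<inter> closed_ball_max (1 / (2 * real CARD('n))) p \<noteq> {}"
  defines "F \<equiv> \<lfloor>real CARD('n) * p$t + 1 / 2\<rfloor>"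
  shows "weighted_prefix_sum (m \<circ> inv r) CARD('n) \<in> {F - int CARD('n) .. F}"
proof -
  let ?d = "CARD('n)" and ?y = "weighted_prefix_sum (m \<circ> inv r) CARD('n)"
  let ?e = "1 / (2 * real ?d)"
  have y: "real_of_int ?y = real ?d * staircase_corner r m $ t"
    using scaled_staircase_corner_top[OF bij top] by simp
  have "real ?d * (p$t - ?e - 1) < real ?d * staircase_corner r m $ t"
    using unit_cube_at_meets_ball_bounds(1)[OF meets] by (intro mult_strict_left_mono) simp_all
  moreover have "real ?d * staircase_corner r m $ t \<le> real ?d * (p$t + ?e)"
    using unit_cube_at_meets_ball_bounds(2)[OF meets] by (intro mult_left_mono) simp_all
  ultimately have "real ?d * p$t - 1 / 2 - real ?d < real_of_int ?y"
    "real_of_int ?y \<le> real ?d * p$t + 1 / 2"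
    using y by (simp_all add: algebra_simps)
  then show ?thesis
    unfolding F_def by (simp add: le_floor_iff) linarith
qed

lemma staircase_neighborhood_card_le:
  fixes r :: "'n::finite \<Rightarrow> nat" and p :: "real^'n"
  assumes bij: "bij_betw r UNIV {..<CARD('n)}"
  defines "e \<equiv> 1 / (2 * real CARD('n))"
  shows "finite (neighborhood (range (\<lambda>m. unit_cube_at (staircase_corner r m))) e p)
    \<and> card (neighborhood (range (\<lambda>m. unit_cube_at (staircase_corner r m))) e p) \<le> CARD('n) + 1"
proof -
  let ?d = "CARD('n)"
  define M where "M = {m. unit_cube_at (staircase_corner r m) \<inter> closed_ball_max e p \<noteq> {}}"
  define top where "top = inv r (?d - 1)"
  have r_top: "r top = ?d - 1"
    unfolding top_def using bij by (auto simp: bij_betw_def f_inv_into_f)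
  define level where "level m = weighted_prefix_sum (m \<circ> inv r) ?d" for m
  define F where "F = \<lfloor>real ?d * p$top + 1 / 2\<rfloor>"
  have "level ` M \<subseteq> {F - int ?d .. F}"
    using staircase_top_sum_near_point[OF bij r_top]
    unfolding level_def M_def F_def e_def by blast
  moreover have "inj_on level M"
  proof (rule inj_onI)
    fix m m'
    assume "m \<in> M" "m' \<in> M" "level m = level m'"
    have "2 * e = 1 / real ?d"
      unfolding e_def by simp
    moreover have "p$i - e - 1 < staircase_corner r m $ i" "staircase_corner r m $ i \<le> p$i + e"
      "p$i - e - 1 < staircase_corner r m' $ i" "staircase_corner r m' $ i \<le> p$i + e" for i
      using \<open>m \<in> M\<close> \<open>m' \<in> M\<close> unit_cube_at_meets_ball_bounds unfolding M_def by blast+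
    ultimately have "\<bar>staircase_corner r m $ i - staircase_corner r m' $ i\<bar> < 1 + 1 / real ?d" for i
      by (smt (verit))
    with bij show "m = m'"
      using \<open>level m = level m'\<close> unfolding level_def by (rule staircase_index_eqI)
  qed
  ultimately have "finite M \<and> card M \<le> Suc ?d"
    using inj_on_into_int_interval_card_le[of level M "F - int ?d" ?d] by simp
  moreover have "neighborhood (range (\<lambda>m. unit_cube_at (staircase_corner r m))) e p
      = (\<lambda>m. unit_cube_at (staircase_corner r m)) ` M"
    unfolding neighborhood_def M_def by auto
  ultimately show ?thesis
    using card_image_le[of M "\<lambda>m. unit_cube_at (staircase_corner r m)"] by auto
qed

theorem mainTheorem1:
  shows "\<exists>P :: (real^'n) set set. unit_hypercube_partition P \<and>
           secluded P (CARD('n) + 1) (1 / (2 * real CARD('n)))"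
proof -
  obtain r :: "'n \<Rightarrow> nat" where bij: "bij_betw r UNIV {..<CARD('n)}"
    using ex_bij_betw_finite_nat[of "UNIV :: 'n set"] by (auto simp: atLeast0LessThan)
  let ?P = "range (\<lambda>m. unit_cube_at (staircase_corner r m))"
  have "unit_hypercube_partition ?P"
    using bij by (rule staircase_partition)
  moreover have "\<forall>p. finite (neighborhood ?P (1 / (2 * real CARD('n))) p)
      \<and> card (neighborhood ?P (1 / (2 * real CARD('n))) p) \<le> CARD('n) + 1"
    using staircase_neighborhood_card_le[OF bij] by blast
  ultimately show ?thesis
    unfolding secluded_def unit_hypercube_partition_def by blast
qed

end
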